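(* ${\sf ITL}^0_{\circ\forall}$ is complete for the class of expanding posets, and ${\sf ITL}^{\sf FS}_{\circ\forall}$ is complete for the class of persistent posets; that is, every $\mathcal L_{\circ\forall}$-formula valid on all expanding posets belongs to ${\sf ITL}^0_{\circ\forall}$, and every $\mathcal L_{\circ\forall}$-formula valid on all persistent posets belongs to ${\sf ITL}^{\sf FS}_{\circ\forall}$.
   Context: Syntax: fix a countably infinite set $\mathbb P$ of propositional variables. $\mathcal L_{\circ\forall}$ is given by $\varphi ::= \bot \mid p \mid \varphi\wedge\varphi \mid \varphi\vee\varphi \mid \varphi\to\varphi \mid \circ\varphi \mid \forall\varphi$ with $p\in\mathbb P$; $\neg\varphi:=\varphi\to\bot$, $\varphi\leftrightarrow\psi := (\varphi\to\psi)\wedge(\psi\to\varphi)$. Here $\forall$ is a universal modality. Semantics: a dynamical system is $(X,\mathcal T,f)$ with $(X,\mathcal T)$ a topological space and $f\colon X\to X$ continuous. A valuation assigns to each formula an open set with $[\![\bot]\!]=\varnothing$, $[\![\varphi\wedge\psi]\!]=[\![\varphi]\!]\cap[\![\psi]\!]$, $[\![\varphi\vee\psi]\!]=[\![\varphi]\!]\cup[\![\psi]\!]$, $[\![\varphi\to\psi]\!]=\big((X\setminus[\![\varphi]\!])\cup[\![\psi]\!]\big)^\circ$, $[\![\circ\varphi]\!]=f^{-1}[\![\varphi]\!]$, and $[\![\forall\varphi]\!]=X$ if $[\![\varphi]\!]=X$, $=\varnothing$ otherwise. A formula is valid on a class if $[\![\varphi]\!]=X$ for every system of the class and every valuation. An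 expanding poset is a dynamical system whose topology is the up-set topology of a partial order (open sets = upward closed sets); equivalently $f$ is monotone. A persistent poset is an expanding poset whose map $f$ is moreover open. Logics: ${\sf ITL}^0_{\circ\forall}$ is the least set of $\mathcal L_{\circ\forall}$-formulas containing all substitution instances of the axioms of intuitionistic propositional logic, of (N1) $\neg\circ\bot$, (N2) $\circ\varphi\wedge\circ\psi\to\circ(\varphi\wedge\psi)$, (N3) $\circ(\varphi\vee\psi)\to\circ\varphi\vee\circ\psi$, (N4) $\circ(\varphi\to\psi)\to(\circ\varphi\to\circ\psi)$, and of (UA1) $\forall\varphi\vee\neg\forall\varphi$, (UA2) $\forall(\varphi\to\psi)\to(\forall\varphi\to\forall\psi)$, (UA3) $\forall(\varphi\vee\forall\psi)\to\forall\varphi\vee\forall\psi$, (UA4) $\forall\varphi\to\varphi$, (UA5) $\forall\varphi\to\forall\forall\varphi$, (UA6) $\forall\varphi\leftrightarrow\circ\forall\varphi$, closed under modus ponens, the rule from $\varphi$ infer $\circ\varphi$, and the rule from $\varphi$ infer $\forall\varphi$. ${\sf ITL}^{\sf FS}_{\circ\forall}$ is defined likewise but additionally with the axiom (N5) $(\circ\varphi\to\circ\psi)\to\circ(\varphi\to\psi)$. *)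

theory Defs
  imports "HOL-Analysis.Analysis"
begin

datatype form =
    Bot
  | Var nat
  | And form form
  | Or form form
  | Imp form form
  | Next form
  | Univ form

definition Neg :: "form \<Rightarrow> form" where
  "Neg \<phi> = Imp \<phi> Bot"

definition Iff :: "form \<Rightarrow> form \<Rightarrow> form" where
  "Iff \<phi> \<psi> = And (Imp \<phi> \<psi>) (Imp \<psi> \<phi>)"

fun sem :: "'w topology \<Rightarrow> ('w \<Rightarrow> 'w) \<Rightarrow> (nat \<Rightarrow> 'w set) \<Rightarrow> form \<Rightarrow> 'w set" where
  "sem T f V Bot = {}"
| "sem T f V (Var p) = V p"
| "sem T f V (And \<phi> \<psi>) = sem T f V \<phi> \<inter> sem T f V \<psi>"
| "sem T f V (Or \<phi> \<psi>) = sem T f V \<phi> \<union> sem T f V \<psi>"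
| "sem T f V (Imp \<phi> \<psi>) = T interior_of ((topspace T - sem T f V \<phi>) \<union> sem T f V \<psi>)"
| "sem T f V (Next \<phi>) = {x \<in> topspace T. f x \<in> sem T f V \<phi>}"
| "sem T f V (Univ \<phi>) = (if sem T f V \<phi> = topspace T then topspace T else {})"

definition up_topology :: "'w set \<Rightarrow> ('w \<times> 'w) set \<Rightarrow> 'w topology" where
  "up_topology W r = topology (\<lambda>U. U \<subseteq> W \<and> (\<forall>x\<in>U. \<forall>y. (x, y) \<in> r \<longrightarrow> y \<in> U))"

text \<open>Validity on the class of expanding posets: dynamical systems whose topology is the
  up-set topology of a partial order, with f continuous. Carriers are subsets of the type
  form set set.\<close>
definition valid_expanding :: "form \<Rightarrow> bool" where
  "valid_expanding \<phi> \<longleftrightarrow>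
     (\<forall>(W :: form set set) r f V.
        partial_order_on W r \<longrightarrow>
        continuous_map (up_topology W r) (up_topology W r) f \<longrightarrow>
        (\<forall>p. openin (up_topology W r) (V p)) \<longrightarrow>
        sem (up_topology W r) f V \<phi> = topspace (up_topology W r))"

definition valid_persistent :: "form \<Rightarrow> bool" where
  "valid_persistent \<phi> \<longleftrightarrow>
     (\<forall>(W :: form set set) r f V.
        partial_order_on W r \<longrightarrow>
        continuous_map (up_topology W r) (up_topology W r) f \<longrightarrow>
        open_map (up_topology W r) (up_topology W r) f \<longrightarrow>
        (\<forall>p. openin (up_topology W r) (V p)) \<longrightarrow>
        sem (up_topology W r) f V \<phi> = topspace (up_topology W r))"

inductive deriv :: "bool \<Rightarrow> form \<Rightarrow> bool" for fs :: bool where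
  ipc_k: "deriv fs (Imp \<phi> (Imp \<psi> \<phi>))"
| ipc_s: "deriv fs (Imp (Imp \<phi> (Imp \<psi> \<theta>)) (Imp (Imp \<phi> \<psi>) (Imp \<phi> \<theta>)))"
| ipc_and1: "deriv fs (Imp (And \<phi> \<psi>) \<phi>)"
| ipc_and2: "deriv fs (Imp (And \<phi> \<psi>) \<psi>)"
| ipc_andI: "deriv fs (Imp \<phi> (Imp \<psi> (And \<phi> \<psi>)))"
| ipc_or1: "deriv fs (Imp \<phi> (Or \<phi> \<psi>))"
| ipc_or2: "deriv fs (Imp \<psi> (Or \<phi> \<psi>))"
| ipc_orE: "deriv fs (Imp (Imp \<phi> \<theta>) (Imp (Imp \<psi> \<theta>) (Imp (Or \<phi> \<psi>) \<theta>)))"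
| ipc_bot: "deriv fs (Imp Bot \<phi>)"
| N1: "deriv fs (Neg (Next Bot))"
| N2: "deriv fs (Imp (And (Next \<phi>) (Next \<psi>)) (Next (And \<phi> \<psi>)))"
| N3: "deriv fs (Imp (Next (Or \<phi> \<psi>)) (Or (Next \<phi>) (Next \<psi>)))"
| N4: "deriv fs (Imp (Next (Imp \<phi> \<psi>)) (Imp (Next \<phi>) (Next \<psi>)))"
| N5: "fs \<Longrightarrow> deriv fs (Imp (Imp (Next \<phi>) (Next \<psi>)) (Next (Imp \<phi> \<psi>)))"
| UA1: "deriv fs (Or (Univ \<phi>) (Neg (Univ \<phi>)))"
| UA2: "deriv fs (Imp (Univ (Imp \<phi> \<psi>)) (Imp (Univ \<phi>) (Univ \<psi>)))"
| UA3: "deriv fs (Imp (Univ (Or \<phi> (Univ \<psi>))) (Or (Univ \<phi>) (Univ \<psi>)))"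
| UA4: "deriv fs (Imp (Univ \<phi>) \<phi>)"
| UA5: "deriv fs (Imp (Univ \<phi>) (Univ (Univ \<phi>)))"
| UA6: "deriv fs (Iff (Univ \<phi>) (Next (Univ \<phi>)))"
| MP: "deriv fs (Imp \<phi> \<psi>) \<Longrightarrow> deriv fs \<phi> \<Longrightarrow> deriv fs \<psi>"
| NecNext: "deriv fs \<phi> \<Longrightarrow> deriv fs (Next \<phi>)"
| NecUniv: "deriv fs \<phi> \<Longrightarrow> deriv fs (Univ \<phi>)"

definition ITL0 :: "form set" where
  "ITL0 = {\<phi>. deriv False \<phi>}"

definition ITLFS :: "form set" where
  "ITLFS = {\<phi>. deriv True \<phi>}"

end

theory Submission imports Defs begin

(* Canonical model. Given an unprovable formula, take a prime theory G0 omitting it. The worlds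
   are the prime theories that agree with G0 on all formulas forall c, ordered by inclusion, and
   f D = {psi. circ psi in D}. N1-N4 make f D prime and UA6 keeps it a world; f is monotone, hence
   continuous for the up-set topology. As all worlds agree on the formulas forall c, UA1-UA5 make
   forall the universal modality on them, which gives the truth lemma. Under N5 every prime theory
   above f x is f D for some world D above x, which is openness of f. *)

(* Necessitation enters only through theorems (rule ax), which keeps the deduction theorem valid. *)
inductive deriv_from :: "bool \<Rightarrow> form set \<Rightarrow> form \<Rightarrow> bool" for fs :: bool and G :: "form set" where
  hyp: "\<phi> \<in> G \<Longrightarrow> deriv_from fs G \<phi>"
| ax: "deriv fs \<phi> \<Longrightarrow> deriv_from fs G \<phi>"
| mp: "deriv_from fs G (Imp \<phi> \<psi>) \<Longrightarrow> deriv_from fs G \<phi> \<Longrightarrow> deriv_from fs G \<psi>"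

lemma deriv_from_mono: "deriv_from fs G \<phi> \<Longrightarrow> G \<subseteq> H \<Longrightarrow> deriv_from fs H \<phi>"
  by (induction rule: deriv_from.induct) (auto intro: deriv_from.intros)

lemma deriv_from_empty: "deriv_from fs {} \<phi> \<Longrightarrow> deriv fs \<phi>"
  by (induction rule: deriv_from.induct) (auto intro: deriv.intros)

lemma deriv_from_finite_subset:
  "deriv_from fs G \<phi> \<Longrightarrow> \<exists>F. finite F \<and> F \<subseteq> G \<and> deriv_from fs F \<phi>"
proof (induction rule: deriv_from.induct)
  case (hyp \<phi>)
  then show ?case by (intro exI[of _ "{\<phi>}"]) (auto intro: deriv_from.hyp)
next
  case (ax \<phi>)
  then show ?case by (intro exI[of _ "{}"]) (auto intro: deriv_from.ax)
next
  case (mp \<phi> \<psi>)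
  then obtain F1 F2 where "finite F1" "F1 \<subseteq> G" "deriv_from fs F1 (Imp \<phi> \<psi>)"
    and "finite F2" "F2 \<subseteq> G" "deriv_from fs F2 \<phi>"
    by blast
  then show ?case
    by (intro exI[of _ "F1 \<union> F2"]) (auto intro: deriv_from.mp deriv_from_mono)
qed

lemma deriv_Imp_refl: "deriv fs (Imp \<phi> \<phi>)"
  using deriv.MP[OF deriv.MP[OF ipc_s ipc_k] ipc_k[where \<psi> = \<phi>]] .

lemma deriv_from_deduction: "deriv_from fs (insert \<phi> G) \<psi> \<Longrightarrow> deriv_from fs G (Imp \<phi> \<psi>)"
proof (induction rule: deriv_from.induct)
  case (hyp \<theta>)
  then show ?case
    by (metis deriv_Imp_refl deriv_from.ax deriv_from.hyp deriv_from.mp insertE ipc_k)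
next
  case (ax \<theta>)
  then show ?case by (meson ipc_k deriv_from.ax deriv_from.mp)
next
  case (mp \<theta> \<chi>)
  then show ?case by (meson ipc_s deriv_from.ax deriv_from.mp)
qed

lemma deriv_from_cut: "deriv_from fs G \<phi> \<Longrightarrow> deriv_from fs (insert \<phi> G) \<psi> \<Longrightarrow> deriv_from fs G \<psi>"
  using deriv_from_deduction deriv_from.mp by blast

lemma deriv_from_by_axiom: "deriv fs (Imp \<phi> \<psi>) \<Longrightarrow> deriv_from fs G \<phi> \<Longrightarrow> deriv_from fs G \<psi>"
  using deriv_from.ax deriv_from.mp by blast

lemma deriv_from_OrE:
  "deriv_from fs G (Or \<phi> \<psi>) \<Longrightarrow> deriv_from fs (insert \<phi> G) \<theta> \<Longrightarrow> deriv_from fs (insert \<psi> G) \<theta>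
    \<Longrightarrow> deriv_from fs G \<theta>"
  by (meson deriv_from_deduction ipc_orE deriv_from.ax deriv_from.mp)

lemma deriv_Next_mono: "deriv fs (Imp \<phi> \<psi>) \<Longrightarrow> deriv fs (Imp (Next \<phi>) (Next \<psi>))"
  by (meson N4 NecNext deriv.MP)

lemma deriv_Or_Next: "deriv fs (Imp (Or (Next \<phi>) (Next \<psi>)) (Next (Or \<phi> \<psi>)))"
  by (meson deriv.MP ipc_orE ipc_or1 ipc_or2 deriv_Next_mono)

definition prime_theory :: "bool \<Rightarrow> form set \<Rightarrow> bool" where
  "prime_theory fs D \<longleftrightarrow>
     (\<forall>\<phi>. deriv_from fs D \<phi> \<longrightarrow> \<phi> \<in> D) \<and> Bot \<notin> D \<and> (\<forall>\<phi> \<psi>. Or \<phi> \<psi> \<in> D \<longrightarrow> \<phi> \<in> D \<or> \<psi> \<in> D)"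

lemma prime_theory_closed: "prime_theory fs D \<Longrightarrow> deriv_from fs D \<phi> \<Longrightarrow> \<phi> \<in> D"
  unfolding prime_theory_def by blast

lemma prime_theory_Bot: "prime_theory fs D \<Longrightarrow> Bot \<notin> D"
  unfolding prime_theory_def by blast

lemma prime_theory_mp: "prime_theory fs D \<Longrightarrow> Imp \<phi> \<psi> \<in> D \<Longrightarrow> \<phi> \<in> D \<Longrightarrow> \<psi> \<in> D"
  by (meson prime_theory_closed deriv_from.hyp deriv_from.mp)

lemma prime_theory_deriv: "prime_theory fs D \<Longrightarrow> deriv fs \<phi> \<Longrightarrow> \<phi> \<in> D"
  by (meson prime_theory_closed deriv_from.ax)

lemma prime_theory_by_axiom: "prime_theory fs D \<Longrightarrow> deriv fs (Imp \<phi> \<psi>) \<Longrightarrow> \<phi> \<in> D \<Longrightarrow> \<psi> \<in> D"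
  by (meson prime_theory_mp prime_theory_deriv)

lemma prime_theory_And: "prime_theory fs D \<Longrightarrow> And \<phi> \<psi> \<in> D \<longleftrightarrow> \<phi> \<in> D \<and> \<psi> \<in> D"
  by (meson ipc_and1 ipc_and2 ipc_andI prime_theory_by_axiom prime_theory_mp)

lemma prime_theory_Or: "prime_theory fs D \<Longrightarrow> Or \<phi> \<psi> \<in> D \<longleftrightarrow> \<phi> \<in> D \<or> \<psi> \<in> D"
  by (meson ipc_or1 ipc_or2 prime_theory_by_axiom prime_theory_def)

lemma maximal_theory_avoiding:
  assumes "\<forall>e\<in>E. \<not> deriv_from fs G e"
  obtains M where "G \<subseteq> M" "\<forall>e\<in>E. \<not> deriv_from fs M e"
    and "\<And>\<phi>. \<phi> \<notin> M \<Longrightarrow> \<exists>e\<in>E. deriv_from fs (insert \<phi> M) e"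
proof -
  define A where "A = {D. G \<subseteq> D \<and> (\<forall>e\<in>E. \<not> deriv_from fs D e)}"
  have "\<exists>M\<in>A. \<forall>X\<in>A. M \<subseteq> X \<longrightarrow> X = M"
  proof (rule subset_Zorn_nonempty)
    show "A \<noteq> {}" using assms unfolding A_def by blast
  next
    fix C assume C: "C \<noteq> {}" "subset.chain A C"
    have "\<not> deriv_from fs (\<Union>C) e" if "e \<in> E" for e
    proof
      assume "deriv_from fs (\<Union>C) e"
      from deriv_from_finite_subset[OF this]
      obtain F where F: "finite F" "F \<subseteq> \<Union>C" "deriv_from fs F e" by blast
      then obtain B where "B \<in> C" "F \<subseteq> B"
        using finite_subset_Union_chain[OF F(1,2) C] by blast
      then have "deriv_from fs B e" using F(3) deriv_from_mono by blast
      moreover have "B \<in> A" using C \<open>B \<in> C\<close> unfolding subset.chain_def by blast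
      ultimately show False using that unfolding A_def by blast
    qed
    moreover have "G \<subseteq> \<Union>C" using C unfolding subset.chain_def A_def by blast
    ultimately show "\<Union>C \<in> A" unfolding A_def by blast
  qed
  then obtain M where M: "M \<in> A" and max: "\<And>X. X \<in> A \<Longrightarrow> M \<subseteq> X \<Longrightarrow> X = M"
    by blast
  show thesis
  proof (rule that)
    show "G \<subseteq> M" "\<forall>e\<in>E. \<not> deriv_from fs M e" using M unfolding A_def by blast+
  next
    fix \<phi> assume "\<phi> \<notin> M"
    then have "insert \<phi> M \<notin> A" using max[of "insert \<phi> M"] by blast
    then show "\<exists>e\<in>E. deriv_from fs (insert \<phi> M) e" using M unfolding A_def by blast
  qed
qed

lemma lindenbaum:
  assumes "e0 \<in> E" and avoid: "\<forall>e\<in>E. \<not> deriv_from fs G e"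
    and Or_closed: "\<And>a b. a \<in> E \<Longrightarrow> b \<in> E \<Longrightarrow> \<exists>c\<in>E. deriv fs (Imp (Or a b) c)"
  obtains D where "prime_theory fs D" "G \<subseteq> D" "D \<inter> E = {}"
proof -
  obtain M where M: "G \<subseteq> M" "\<forall>e\<in>E. \<not> deriv_from fs M e"
    and max: "\<And>\<phi>. \<phi> \<notin> M \<Longrightarrow> \<exists>e\<in>E. deriv_from fs (insert \<phi> M) e"
    using maximal_theory_avoiding[OF avoid] by blast
  have closed: "\<phi> \<in> M" if "deriv_from fs M \<phi>" for \<phi>
  proof (rule ccontr)
    assume "\<phi> \<notin> M"
    then obtain e where "e \<in> E" "deriv_from fs (insert \<phi> M) e" using max by blast
    with M(2) show False using deriv_from_cut[OF that] by blast
  qed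
  have "Bot \<notin> M"
  proof
    assume "Bot \<in> M"
    then have "deriv_from fs M e0" using deriv_from_by_axiom[OF ipc_bot deriv_from.hyp] by blast
    with M(2) \<open>e0 \<in> E\<close> show False by blast
  qed
  moreover have "\<phi> \<in> M \<or> \<psi> \<in> M" if "Or \<phi> \<psi> \<in> M" for \<phi> \<psi>
  proof (rule ccontr)
    assume "\<not> ?thesis"
    then obtain e1 e2 where "e1 \<in> E" "deriv_from fs (insert \<phi> M) e1"
      and "e2 \<in> E" "deriv_from fs (insert \<psi> M) e2"
      using max by blast
    moreover from this obtain c where "c \<in> E" and c: "deriv fs (Imp (Or e1 e2) c)"
      using Or_closed by blast
    ultimately have "deriv_from fs (insert \<phi> M) c" "deriv_from fs (insert \<psi> M) c"
      by (blast intro: deriv_from_by_axiom[OF c] deriv_from_by_axiom[OF ipc_or1]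
          deriv_from_by_axiom[OF ipc_or2])+
    then have "deriv_from fs M c" by (rule deriv_from_OrE[OF deriv_from.hyp[OF that]])
    with M(2) \<open>c \<in> E\<close> show False by blast
  qed
  ultimately have "prime_theory fs M" unfolding prime_theory_def using closed by blast
  moreover have "M \<inter> E = {}" using M(2) deriv_from.hyp by blast
  ultimately show thesis using that M(1) by blast
qed

lemma lindenbaum_single:
  assumes "\<not> deriv_from fs G \<psi>"
  obtains D where "prime_theory fs D" "G \<subseteq> D" "\<psi> \<notin> D"
proof (rule lindenbaum[of \<psi> "{\<psi>}"])
  show "\<forall>e\<in>{\<psi>}. \<not> deriv_from fs G e" using assms by simp
  show "\<exists>c\<in>{\<psi>}. deriv fs (Imp (Or a b) c)" if "a \<in> {\<psi>}" "b \<in> {\<psi>}" for a b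
    using that deriv.MP[OF deriv.MP[OF ipc_orE deriv_Imp_refl] deriv_Imp_refl] by simp
qed (use that in auto)

definition incl_on :: "'a set set \<Rightarrow> ('a set \<times> 'a set) set" where
  "incl_on W = {(x, y). x \<in> W \<and> y \<in> W \<and> x \<subseteq> y}"

lemma partial_order_on_incl_on: "partial_order_on W (incl_on W)"
  unfolding partial_order_on_def preorder_on_def refl_on_def trans_def antisym_def incl_on_def
  by auto

lemma openin_up_topology:
  "openin (up_topology W r) U \<longleftrightarrow> U \<subseteq> W \<and> (\<forall>x\<in>U. \<forall>y. (x, y) \<in> r \<longrightarrow> y \<in> U)"
proof -
  have "istopology (\<lambda>U. U \<subseteq> W \<and> (\<forall>x\<in>U. \<forall>y. (x, y) \<in> r \<longrightarrow> y \<in> U))"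
    unfolding istopology_def by blast
  then show ?thesis unfolding up_topology_def by (simp add: topology_inverse')
qed

lemma openin_up_incl_on:
  "openin (up_topology W (incl_on W)) U \<longleftrightarrow> U \<subseteq> W \<and> (\<forall>x\<in>U. \<forall>y\<in>W. x \<subseteq> y \<longrightarrow> y \<in> U)"
  unfolding openin_up_topology incl_on_def by blast

lemma topspace_up_incl_on: "topspace (up_topology W (incl_on W)) = W"
  by (metis openin_subset openin_topspace openin_up_incl_on subset_antisym subset_refl)

lemma interior_of_up_incl_on:
  "up_topology W (incl_on W) interior_of S = {x\<in>W. \<forall>y\<in>W. x \<subseteq> y \<longrightarrow> y \<in> S}"
proof (intro set_eqI iffI)
  fix x assume "x \<in> up_topology W (incl_on W) interior_of S"
  then show "x \<in> {x\<in>W. \<forall>y\<in>W. x \<subseteq> y \<longrightarrow> y \<in> S}"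
    unfolding interior_of_def openin_up_incl_on by blast
next
  fix x assume x: "x \<in> {x\<in>W. \<forall>y\<in>W. x \<subseteq> y \<longrightarrow> y \<in> S}"
  have "openin (up_topology W (incl_on W)) {y\<in>W. x \<subseteq> y}"
    unfolding openin_up_incl_on by blast
  with x show "x \<in> up_topology W (incl_on W) interior_of S"
    unfolding interior_of_def by blast
qed

lemma continuous_map_up_incl_on:
  assumes "f \<in> W \<rightarrow> W" and mono: "\<And>x y. x \<in> W \<Longrightarrow> y \<in> W \<Longrightarrow> x \<subseteq> y \<Longrightarrow> f x \<subseteq> f y"
  shows "continuous_map (up_topology W (incl_on W)) (up_topology W (incl_on W)) f"
  unfolding continuous_map_def topspace_up_incl_on
proof (intro conjI allI impI)
  fix U assume "openin (up_topology W (incl_on W)) U"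
  then have up: "\<And>u v. u \<in> U \<Longrightarrow> v \<in> W \<Longrightarrow> u \<subseteq> v \<Longrightarrow> v \<in> U"
    unfolding openin_up_incl_on by blast
  have "f y \<in> U" if "x \<in> W" "f x \<in> U" "y \<in> W" "x \<subseteq> y" for x y
    using up[OF that(2) _ mono[OF that(1,3,4)]] funcset_mem[OF assms(1) that(3)] .
  then show "openin (up_topology W (incl_on W)) {x \<in> W. f x \<in> U}"
    unfolding openin_up_incl_on by blast
qed (rule assms(1))

lemma open_map_up_incl_on:
  assumes "f \<in> W \<rightarrow> W"
    and lift: "\<And>x y. x \<in> W \<Longrightarrow> y \<in> W \<Longrightarrow> f x \<subseteq> y \<Longrightarrow> \<exists>z\<in>W. x \<subseteq> z \<and> f z = y"
  shows "open_map (up_topology W (incl_on W)) (up_topology W (incl_on W)) f"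
  unfolding open_map_def
proof (intro allI impI)
  fix U assume U: "openin (up_topology W (incl_on W)) U"
  have up: "y \<in> f ` U" if "x \<in> U" and y: "y \<in> W" "f x \<subseteq> y" for x y
  proof -
    have "x \<in> W" using U \<open>x \<in> U\<close> unfolding openin_up_incl_on by blast
    then obtain z where "z \<in> W" "x \<subseteq> z" "f z = y" using lift y by blast
    moreover from this have "z \<in> U" using U \<open>x \<in> U\<close> unfolding openin_up_incl_on by blast
    ultimately show ?thesis by blast
  qed
  moreover have "f ` U \<subseteq> W" using U assms(1) unfolding openin_up_incl_on by auto
  ultimately show "openin (up_topology W (incl_on W)) (f ` U)"
    unfolding openin_up_incl_on by fast
qed

definition univ_sig :: "form set \<Rightarrow> form set" where
  "univ_sig G0 = {c. Univ c \<in> G0} \<union> {Neg (Univ c) | c. Univ c \<notin> G0}"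

definition canonical_worlds :: "bool \<Rightarrow> form set \<Rightarrow> form set set" where
  "canonical_worlds fs G0 = {D. prime_theory fs D \<and> univ_sig G0 \<subseteq> D}"

definition next_theory :: "form set \<Rightarrow> form set" where
  "next_theory D = {\<psi>. Next \<psi> \<in> D}"

lemma canonical_worlds_prime: "D \<in> canonical_worlds fs G0 \<Longrightarrow> prime_theory fs D"
  unfolding canonical_worlds_def by blast

lemma canonical_worlds_upward:
  "D \<in> canonical_worlds fs G0 \<Longrightarrow> prime_theory fs D' \<Longrightarrow> D \<subseteq> D' \<Longrightarrow> D' \<in> canonical_worlds fs G0"
  unfolding canonical_worlds_def by blast

lemma canonical_worlds_Univ_iff:
  assumes G0: "prime_theory fs G0" and D: "D \<in> canonical_worlds fs G0"
  shows "Univ c \<in> D \<longleftrightarrow> Univ c \<in> G0"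
proof
  assume "Univ c \<in> D"
  moreover have "Bot \<notin> D" using D canonical_worlds_prime prime_theory_Bot by blast
  ultimately show "Univ c \<in> G0"
    using D prime_theory_mp unfolding canonical_worlds_def univ_sig_def Neg_def by blast
next
  assume "Univ c \<in> G0"
  then have "Univ (Univ c) \<in> G0" using G0 UA5 prime_theory_by_axiom by blast
  then show "Univ c \<in> D" using D unfolding canonical_worlds_def univ_sig_def by blast
qed

lemma univ_sig_subset:
  assumes P: "prime_theory fs P" and same: "\<And>c. Univ c \<in> P \<longleftrightarrow> Univ c \<in> G0"
  shows "univ_sig G0 \<subseteq> P"
proof
  fix \<phi> assume "\<phi> \<in> univ_sig G0"
  then consider c where "\<phi> = c" "Univ c \<in> G0" | c where "\<phi> = Neg (Univ c)" "Univ c \<notin> G0"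
    unfolding univ_sig_def by blast
  then show "\<phi> \<in> P"
  proof cases
    case 1
    then show ?thesis using same P UA4 prime_theory_by_axiom by blast
  next
    case 2
    then show ?thesis using same P UA1 prime_theory_Or prime_theory_deriv by blast
  qed
qed

lemma self_in_canonical_worlds: "prime_theory fs G0 \<Longrightarrow> G0 \<in> canonical_worlds fs G0"
  unfolding canonical_worlds_def using univ_sig_subset by blast

lemma prime_theory_next_theory:
  assumes D: "prime_theory fs D"
  shows "prime_theory fs (next_theory D)"
proof -
  have "Next \<phi> \<in> D" if "deriv_from fs (next_theory D) \<phi>" for \<phi>
    using that
  proof (induction rule: deriv_from.induct)
    case (hyp \<phi>)
    then show ?case unfolding next_theory_def by blast
  next
    case (ax \<phi>)
    then show ?case using D NecNext prime_theory_deriv by blast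
  next
    case (mp \<phi> \<psi>)
    then show ?case using D N4 prime_theory_by_axiom prime_theory_mp by meson
  qed
  moreover have "Next Bot \<notin> D"
    using D N1 prime_theory_by_axiom prime_theory_Bot unfolding Neg_def by meson
  moreover have "Next \<phi> \<in> D \<or> Next \<psi> \<in> D" if "Next (Or \<phi> \<psi>) \<in> D" for \<phi> \<psi>
    using that D N3 prime_theory_by_axiom prime_theory_Or by blast
  ultimately show ?thesis unfolding prime_theory_def next_theory_def by blast
qed

lemma next_theory_in_canonical_worlds:
  assumes G0: "prime_theory fs G0" and D: "D \<in> canonical_worlds fs G0"
  shows "next_theory D \<in> canonical_worlds fs G0"
proof -
  have P: "prime_theory fs D" using D canonical_worlds_prime by blast
  have "Univ c \<in> D \<longleftrightarrow> Next (Univ c) \<in> D" for c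
    using UA6[of fs c] P prime_theory_deriv prime_theory_And prime_theory_mp
    unfolding Iff_def by metis
  then have "Univ c \<in> next_theory D \<longleftrightarrow> Univ c \<in> G0" for c
    using canonical_worlds_Univ_iff[OF G0 D] unfolding next_theory_def by blast
  then show ?thesis
    using univ_sig_subset prime_theory_next_theory[OF P] unfolding canonical_worlds_def by blast
qed

lemma prime_theory_Univ_closed:
  assumes G0: "prime_theory fs G0" and "deriv_from fs {c. Univ c \<in> G0} \<psi>"
  shows "Univ \<psi> \<in> G0"
  using assms(2)
proof (induction rule: deriv_from.induct)
  case (hyp \<phi>)
  then show ?case by blast
next
  case (ax \<phi>)
  then show ?case using G0 NecUniv prime_theory_deriv by blast
next
  case (mp \<phi> \<psi>)
  then show ?case using G0 UA2 prime_theory_by_axiom prime_theory_mp by meson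
qed

lemma prime_theory_Univ_closed_finite:
  assumes G0: "prime_theory fs G0" and "finite N" "\<forall>\<theta>\<in>N. Univ \<theta> \<notin> G0"
    and "deriv_from fs ({c. Univ c \<in> G0} \<union> (\<lambda>\<theta>. Neg (Univ \<theta>)) ` N) \<psi>"
  shows "Univ \<psi> \<in> G0"
  using assms(2-)
proof (induction N arbitrary: \<psi> rule: finite_induct)
  case empty
  then show ?case using prime_theory_Univ_closed[OF G0] by simp
next
  case (insert \<theta> N)
  let ?H = "{c. Univ c \<in> G0} \<union> (\<lambda>\<theta>. Neg (Univ \<theta>)) ` N"
  (* By UA1 the hypothesis not forall theta can be traded for the disjunct forall theta;
     UA3 then splits forall (psi or forall theta), and forall theta is excluded. *)
  have "deriv_from fs (insert (Neg (Univ \<theta>)) ?H) (Or \<psi> (Univ \<theta>))"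
    using insert.prems(2) by (simp add: deriv_from_by_axiom[OF ipc_or1])
  moreover have "deriv_from fs (insert (Univ \<theta>) ?H) (Or \<psi> (Univ \<theta>))"
    by (meson deriv_from_by_axiom ipc_or2 deriv_from.hyp insertI1)
  ultimately have "deriv_from fs ?H (Or \<psi> (Univ \<theta>))"
    using deriv_from_OrE[OF deriv_from.ax[OF UA1]] by blast
  then have "Univ (Or \<psi> (Univ \<theta>)) \<in> G0" using insert.IH insert.prems(1) by blast
  then have "Or (Univ \<psi>) (Univ \<theta>) \<in> G0" using G0 UA3 prime_theory_by_axiom by blast
  then show "Univ \<psi> \<in> G0" using insert.prems(1) G0 prime_theory_Or by blast
qed

lemma prime_theory_Univ_closed_univ_sig:
  assumes G0: "prime_theory fs G0" and "deriv_from fs (univ_sig G0) \<psi>"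
  shows "Univ \<psi> \<in> G0"
proof -
  from deriv_from_finite_subset[OF assms(2)]
  obtain F where F: "finite F" "F \<subseteq> univ_sig G0" "deriv_from fs F \<psi>" by blast
  define N where "N = {\<theta>. Neg (Univ \<theta>) \<in> F \<and> Univ \<theta> \<notin> G0}"
  have "finite N"
    by (rule finite_subset[of _ "(\<lambda>\<theta>. Neg (Univ \<theta>)) -` F"])
      (auto simp: N_def inj_def Neg_def intro: finite_vimageI[OF F(1)])
  moreover have "F \<subseteq> {c. Univ c \<in> G0} \<union> (\<lambda>\<theta>. Neg (Univ \<theta>)) ` N"
    using F(2) unfolding univ_sig_def N_def by blast
  ultimately show ?thesis
    using prime_theory_Univ_closed_finite[OF G0] F(3) deriv_from_mono unfolding N_def by blast
qed

lemma canonical_worlds_Imp_iff: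
  assumes D: "D \<in> canonical_worlds fs G0"
  shows "Imp \<phi> \<psi> \<in> D \<longleftrightarrow> (\<forall>E\<in>canonical_worlds fs G0. D \<subseteq> E \<longrightarrow> \<phi> \<in> E \<longrightarrow> \<psi> \<in> E)"
proof
  assume "Imp \<phi> \<psi> \<in> D"
  then show "\<forall>E\<in>canonical_worlds fs G0. D \<subseteq> E \<longrightarrow> \<phi> \<in> E \<longrightarrow> \<psi> \<in> E"
    using canonical_worlds_prime prime_theory_mp by blast
next
  assume all: "\<forall>E\<in>canonical_worlds fs G0. D \<subseteq> E \<longrightarrow> \<phi> \<in> E \<longrightarrow> \<psi> \<in> E"
  show "Imp \<phi> \<psi> \<in> D"
  proof (rule ccontr)
    assume "Imp \<phi> \<psi> \<notin> D"
    then have "\<not> deriv_from fs (insert \<phi> D) \<psi>"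
      using deriv_from_deduction prime_theory_closed canonical_worlds_prime[OF D] by blast
    then obtain E where "prime_theory fs E" "insert \<phi> D \<subseteq> E" "\<psi> \<notin> E"
      by (rule lindenbaum_single)
    then show False using all canonical_worlds_upward[OF D] by blast
  qed
qed

lemma canonical_worlds_Univ_mem_iff:
  assumes G0: "prime_theory fs G0"
  shows "(\<forall>D\<in>canonical_worlds fs G0. \<phi> \<in> D) \<longleftrightarrow> Univ \<phi> \<in> G0"
proof
  assume all: "\<forall>D\<in>canonical_worlds fs G0. \<phi> \<in> D"
  show "Univ \<phi> \<in> G0"
  proof (rule ccontr)
    assume "Univ \<phi> \<notin> G0"
    then have "\<not> deriv_from fs (univ_sig G0) \<phi>"
      using prime_theory_Univ_closed_univ_sig[OF G0] by blast
    then obtain D where "prime_theory fs D" "univ_sig G0 \<subseteq> D" "\<phi> \<notin> D"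
      by (rule lindenbaum_single)
    with all show False unfolding canonical_worlds_def by blast
  qed
next
  assume "Univ \<phi> \<in> G0"
  then show "\<forall>D\<in>canonical_worlds fs G0. \<phi> \<in> D"
    using canonical_worlds_Univ_iff[OF G0] canonical_worlds_prime UA4 prime_theory_by_axiom
    by blast
qed

lemma truth_lemma:
  assumes G0: "prime_theory fs G0"
  defines "W \<equiv> canonical_worlds fs G0"
  shows "sem (up_topology W (incl_on W)) next_theory (\<lambda>p. {D\<in>W. Var p \<in> D}) \<phi> = {D\<in>W. \<phi> \<in> D}"
proof (induction \<phi>)
  case Bot
  have "Bot \<notin> D" if "D \<in> W" for D
    using that canonical_worlds_prime prime_theory_Bot unfolding W_def by blast
  then show ?case by auto
next
  case (Var p)
  then show ?case by simp
next
  case (And \<phi> \<psi>)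
  have "And \<phi> \<psi> \<in> D \<longleftrightarrow> \<phi> \<in> D \<and> \<psi> \<in> D" if "D \<in> W" for D
    using that canonical_worlds_prime prime_theory_And unfolding W_def by blast
  with And show ?case by auto
next
  case (Or \<phi> \<psi>)
  have "Or \<phi> \<psi> \<in> D \<longleftrightarrow> \<phi> \<in> D \<or> \<psi> \<in> D" if "D \<in> W" for D
    using that canonical_worlds_prime prime_theory_Or unfolding W_def by blast
  with Or show ?case by auto
next
  case (Imp \<phi> \<psi>)
  have "Imp \<phi> \<psi> \<in> D \<longleftrightarrow> (\<forall>E\<in>W. D \<subseteq> E \<longrightarrow> \<phi> \<in> E \<longrightarrow> \<psi> \<in> E)" if "D \<in> W" for D
    using that canonical_worlds_Imp_iff unfolding W_def by blast
  with Imp show ?case by (auto simp: topspace_up_incl_on interior_of_up_incl_on)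
next
  case (Next \<phi>)
  have "next_theory D \<in> W" if "D \<in> W" for D
    using that next_theory_in_canonical_worlds[OF G0] unfolding W_def by blast
  with Next show ?case by (auto simp: topspace_up_incl_on next_theory_def)
next
  case (Univ \<phi>)
  have "Univ \<phi> \<in> D \<longleftrightarrow> Univ \<phi> \<in> G0" if "D \<in> W" for D
    using that canonical_worlds_Univ_iff[OF G0] unfolding W_def by blast
  moreover have "(\<forall>D\<in>W. \<phi> \<in> D) \<longleftrightarrow> Univ \<phi> \<in> G0"
    using canonical_worlds_Univ_mem_iff[OF G0] unfolding W_def by blast
  ultimately show ?case using Univ by (auto simp: topspace_up_incl_on)
qed

lemma continuous_map_next_theory:
  assumes "prime_theory fs G0"
  defines "W \<equiv> canonical_worlds fs G0"
  shows "continuous_map (up_topology W (incl_on W)) (up_topology W (incl_on W)) next_theory"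
  using next_theory_in_canonical_worlds[OF assms(1)]
  by (intro continuous_map_up_incl_on) (auto simp: W_def next_theory_def)

(* N5 moves each hypothesis circ t into the consequent: x, circ t |- circ c gives x |- circ (t -> c). *)
lemma next_theory_deriv_from_finite:
  assumes x: "prime_theory True x" and y: "prime_theory True y" and xy: "next_theory x \<subseteq> y"
    and "finite N" "N \<subseteq> y" "deriv_from True (x \<union> Next ` N) (Next c)"
  shows "c \<in> y"
  using assms(4-)
proof (induction N arbitrary: c rule: finite_induct)
  case empty
  then show ?case using prime_theory_closed[OF x] xy unfolding next_theory_def by auto
next
  case (insert t N)
  then have "deriv_from True (insert (Next t) (x \<union> Next ` N)) (Next c)"
    by (simp add: insert_commute)
  then have "deriv_from True (x \<union> Next ` N) (Next (Imp t c))"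
    using deriv_from_by_axiom[OF N5[OF TrueI]] deriv_from_deduction by blast
  then have "Imp t c \<in> y" using insert by blast
  then show "c \<in> y" using insert.prems(1) y prime_theory_mp by blast
qed

lemma next_theory_lift:
  assumes x: "prime_theory True x" and y: "prime_theory True y" and xy: "next_theory x \<subseteq> y"
  obtains D where "prime_theory True D" "x \<subseteq> D" "next_theory D = y"
proof -
  let ?E = "Next ` (- y)"
  have "\<not> deriv_from True (x \<union> Next ` y) e" if e: "e \<in> ?E" for e
  proof
    assume "deriv_from True (x \<union> Next ` y) e"
    obtain c where c: "e = Next c" "c \<notin> y" using e by blast
    from deriv_from_finite_subset[OF \<open>deriv_from True (x \<union> Next ` y) e\<close>]
    obtain F where F: "finite F" "F \<subseteq> x \<union> Next ` y" "deriv_from True F e" by blast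
    define N where "N = {t \<in> y. Next t \<in> F}"
    have "finite N" unfolding N_def
      by (rule finite_subset[OF _ finite_vimageI[OF F(1)]]) (auto simp: inj_def)
    moreover have "N \<subseteq> y" unfolding N_def by blast
    moreover have "F \<subseteq> x \<union> Next ` N" using F(2) unfolding N_def by blast
    then have "deriv_from True (x \<union> Next ` N) (Next c)" using deriv_from_mono F(3) c(1) by blast
    ultimately show False using next_theory_deriv_from_finite[OF x y xy] c(2) by blast
  qed
  moreover have "\<exists>c\<in>?E. deriv True (Imp (Or a b) c)" if "a \<in> ?E" "b \<in> ?E" for a b
    using that y prime_theory_Or deriv_Or_Next by blast
  moreover have "Next Bot \<in> ?E" using y prime_theory_Bot by blast
  ultimately obtain D where "prime_theory True D" "x \<union> Next ` y \<subseteq> D" "D \<inter> ?E = {}"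
    using lindenbaum by metis
  moreover from this have "next_theory D = y" unfolding next_theory_def by blast
  ultimately show thesis using that by blast
qed

lemma open_map_next_theory:
  assumes "prime_theory True G0"
  defines "W \<equiv> canonical_worlds True G0"
  shows "open_map (up_topology W (incl_on W)) (up_topology W (incl_on W)) next_theory"
proof (rule open_map_up_incl_on)
  show "next_theory \<in> W \<rightarrow> W" using next_theory_in_canonical_worlds[OF assms(1)] W_def by blast
  fix x y assume "x \<in> W" "y \<in> W" "next_theory x \<subseteq> y"
  then obtain z where "prime_theory True z" "x \<subseteq> z" "next_theory z = y"
    using next_theory_lift canonical_worlds_prime unfolding W_def by metis
  then show "\<exists>z\<in>W. x \<subseteq> z \<and> next_theory z = y"
    using \<open>x \<in> W\<close> canonical_worlds_upward unfolding W_def by blast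
qed

lemma deriv_complete_for_posets:
  assumes valid: "\<forall>(W :: form set set) r f V. partial_order_on W r \<longrightarrow>
      continuous_map (up_topology W r) (up_topology W r) f \<longrightarrow>
      (fs \<longrightarrow> open_map (up_topology W r) (up_topology W r) f) \<longrightarrow>
      (\<forall>p. openin (up_topology W r) (V p)) \<longrightarrow>
      sem (up_topology W r) f V \<phi> = topspace (up_topology W r)"
  shows "deriv fs \<phi>"
proof (rule ccontr)
  assume "\<not> deriv fs \<phi>"
  then obtain G0 where G0: "prime_theory fs G0" "\<phi> \<notin> G0"
    using deriv_from_empty lindenbaum_single by metis
  define W where "W = canonical_worlds fs G0"
  define V where "V = (\<lambda>p. {D\<in>W. Var p \<in> D})"
  have "fs \<longrightarrow> open_map (up_topology W (incl_on W)) (up_topology W (incl_on W)) next_theory"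
    using open_map_next_theory[of G0] G0(1) unfolding W_def by (cases fs) simp_all
  moreover have "\<forall>p. openin (up_topology W (incl_on W)) (V p)"
    unfolding V_def openin_up_incl_on by blast
  ultimately have "sem (up_topology W (incl_on W)) next_theory V \<phi> = topspace (up_topology W (incl_on W))"
    using valid[rule_format, OF partial_order_on_incl_on continuous_map_next_theory[OF G0(1)]]
    unfolding W_def by blast
  then have "{D\<in>W. \<phi> \<in> D} = W"
    unfolding V_def W_def truth_lemma[OF G0(1)] topspace_up_incl_on .
  then show False using self_in_canonical_worlds[OF G0(1)] G0(2) unfolding W_def by blast
qed

theorem theorem9p4:
  shows "(\<forall>\<phi>. valid_expanding \<phi> \<longrightarrow> \<phi> \<in> ITL0) \<and>
         (\<forall>\<phi>. valid_persistent \<phi> \<longrightarrow> \<phi> \<in> ITLFS)"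
  unfolding valid_expanding_def valid_persistent_def ITL0_def ITLFS_def
  by (auto intro: deriv_complete_for_posets)

end
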